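(* Let $1\le m\le d$ and $\nu>0$. Let $\mathcal U(\nu)$ be the uniform distribution on the sphere $\{x\in\mathbb{R}^d:\|x\|_2=\nu\}$ and $\mathcal P$ the uniform distribution over rank-$m$ orthogonal projection matrices on $\mathbb{R}^d$. Then, with the infimum over all (possibly randomized) measurable estimators $T$, $$\inf_T\sup_{x:\|x\|_2=\nu}\mathbb E_{\Pi\sim\mathcal P}\|T(\Pi,\Pi x)-x\|_2^2\ \ge\ \inf_T\mathbb E_{x\sim\mathcal U(\nu)}\mathbb E_{\Pi\sim\mathcal P}\|T(\Pi,\Pi x)-x\|_2^2\ \ge\ \nu^2\Big(1-\frac md\Big).$$
   Context: The uniform distribution over rank-$m$ orthogonal projections is that of the orthogonal projection onto a Haar-uniform random $m$-dimensional subspace, independent of $x$; expectations also include any internal randomness of $T$. *)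

theory Defs
  imports "HOL-Analysis.Analysis" "HOL-Probability.Probability"
begin

definition rank_proj :: "nat \<Rightarrow> (real^'n^'n) set" where
  "rank_proj m = {A. transpose A = A \<and> A ** A = A \<and> rank A = m}"

text \<open>Uniform (rotation-invariant) probability distribution on the sphere of radius nu.
  By uniqueness of the invariant probability measure on the sphere this is exactly the
  normalised surface measure.\<close>
definition uniform_sphere_measure :: "real \<Rightarrow> (real^'n) measure \<Rightarrow> bool" where
  "uniform_sphere_measure \<nu> U \<longleftrightarrow>
     prob_space U \<and> sets U = sets borel \<and> emeasure U (sphere 0 \<nu>) = 1 \<and>
     (\<forall>Q::real^'n^'n. orthogonal_matrix Q \<longrightarrow> distr U borel (\<lambda>x. Q *v x) = U)"

text \<open>Uniform (Haar) distribution over rank-m orthogonal projections: a probability measure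
  concentrated on rank-m projections, invariant under conjugation by orthogonal matrices
  (the unique O(d)-invariant probability measure on the Grassmannian).\<close>
definition uniform_proj_measure :: "nat \<Rightarrow> (real^'n^'n) measure \<Rightarrow> bool" where
  "uniform_proj_measure m P \<longleftrightarrow>
     prob_space P \<and> sets P = sets borel \<and> emeasure P (rank_proj m) = 1 \<and>
     (\<forall>Q::real^'n^'n. orthogonal_matrix Q \<longrightarrow>
        distr P borel (\<lambda>A. Q ** A ** transpose Q) = P)"

text \<open>Randomized measurable estimators using internal randomness r drawn from R
  (independent of x and Pi): T r Pi y is the estimate from (Pi, y).\<close>
definition estimators :: "'r measure \<Rightarrow>
    ('r \<Rightarrow> real^'n^'n \<Rightarrow> real^'n \<Rightarrow> real^'n) set" where
  "estimators R = {T. (\<lambda>(r, A, y). T r A y) \<in>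
       borel_measurable (R \<Otimes>\<^sub>M (borel \<Otimes>\<^sub>M borel))}"

definition risk :: "'r measure \<Rightarrow> (real^'n^'n) measure \<Rightarrow>
    ('r \<Rightarrow> real^'n^'n \<Rightarrow> real^'n \<Rightarrow> real^'n) \<Rightarrow> real^'n \<Rightarrow> ennreal" where
  "risk R P T x = (\<integral>\<^sup>+ A. (\<integral>\<^sup>+ r. ennreal ((norm (T r A (A *v x) - x))\<^sup>2) \<partial>R) \<partial>P)"

end

theory Submission
  imports Defs
begin

text \<open>Fix a projection \<open>\<Pi>\<close> and let \<open>Q = 2\<Pi> - I\<close> be the reflection in its range. \<open>Q\<close> is
  orthogonal, so it preserves the uniform distribution on the sphere, and \<open>\<Pi> (Q x) = \<Pi> x\<close>, so an
  estimator cannot distinguish \<open>x\<close> from \<open>Q x\<close>. By the parallelogram law the average of the two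
  errors is at least \<open>\<parallel>x - \<Pi> x\<parallel>\<^sup>2\<close>, whose expectation under the isotropic distribution
  \<open>E x x\<^sup>T = (\<nu>\<^sup>2/d) I\<close> is \<open>\<nu>\<^sup>2 (1 - tr \<Pi> / d) = \<nu>\<^sup>2 (1 - m/d)\<close>. Averaging over \<open>\<Pi>\<close> with Fubini gives the
  Bayes bound, and the minimax risk dominates the Bayes risk.\<close>

lemma linear_borel_measurable:
  fixes f :: "'a::euclidean_space \<Rightarrow> 'b::real_normed_vector"
  assumes "linear f"
  shows "f \<in> borel_measurable borel"
  using assms
  by (intro borel_measurable_continuous_onI linear_continuous_on linear_conv_bounded_linear[THEN iffD1])

lemma nn_integral_le_SUP_if_AE_in:
  assumes "prob_space M" and "AE x in M. x \<in> S"
  shows "(\<integral>\<^sup>+ x. f x \<partial>M) \<le> (SUP x\<in>S. f x)"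
proof -
  interpret prob_space M by (rule assms(1))
  have "(\<integral>\<^sup>+ x. f x \<partial>M) \<le> (\<integral>\<^sup>+ x. (SUP y\<in>S. f y) \<partial>M)"
    using assms(2) by (intro nn_integral_mono_AE) (auto elim!: eventually_mono intro: SUP_upper)
  also have "\<dots> = (SUP y\<in>S. f y)" by (simp add: emeasure_space_1)
  finally show ?thesis .
qed

lemma parallelogram_reflection_lower_bound:
  fixes t x a :: "'a::real_inner"
  shows "2 * (norm (x - a))\<^sup>2 \<le> (norm (t - x))\<^sup>2 + (norm (t - (2 *\<^sub>R a - x)))\<^sup>2"
proof -
  have "(norm (t - x))\<^sup>2 + (norm (t - (2 *\<^sub>R a - x)))\<^sup>2 = 2 * (norm (t - a))\<^sup>2 + 2 * (norm (x - a))\<^sup>2"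
    by (simp add: power2_norm_eq_inner inner_diff_left inner_diff_right inner_add_left
        inner_add_right inner_commute algebra_simps)
  then show ?thesis by simp
qed

lemma uniform_sphere_prob_space: "uniform_sphere_measure \<nu> U \<Longrightarrow> prob_space U"
  by (simp add: uniform_sphere_measure_def)

lemma measurable_uniform_sphere:
  "uniform_sphere_measure \<nu> U \<Longrightarrow> measurable U M = measurable borel M"
  by (intro measurable_cong_sets) (simp_all add: uniform_sphere_measure_def)

lemma AE_in_uniform_sphere:
  assumes "uniform_sphere_measure \<nu> U"
  shows "AE x in U. x \<in> sphere 0 \<nu>"
proof -
  interpret prob_space U using assms by (rule uniform_sphere_prob_space)
  have "prob (sphere 0 \<nu>) = 1" using assms by (simp add: uniform_sphere_measure_def measure_def)
  then show ?thesis by (rule AE_prob_1)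
qed

lemma distr_uniform_sphere_orthogonal:
  assumes U: "uniform_sphere_measure \<nu> U" and f: "orthogonal_transformation f"
  shows "distr U borel f = U"
proof -
  have "orthogonal_matrix (matrix f)" using f orthogonal_transformation_matrix by blast
  then have "distr U borel (\<lambda>x. matrix f *v x) = U" using U by (simp add: uniform_sphere_measure_def)
  then show ?thesis using f by (simp add: orthogonal_transformation_linear)
qed

lemma integral_uniform_sphere_orthogonal:
  fixes g :: "real^'n \<Rightarrow> real"
  assumes U: "uniform_sphere_measure \<nu> U" and f: "orthogonal_transformation f"
    and g: "g \<in> borel_measurable borel"
  shows "(\<integral> x. g (f x) \<partial>U) = (\<integral> x. g x \<partial>U)"
  using integral_distr[of f U borel g] distr_uniform_sphere_orthogonal[OF U f] g
    linear_borel_measurable[OF orthogonal_transformation_linear[OF f]]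
  by (simp add: measurable_uniform_sphere[OF U])

lemma nn_integral_uniform_sphere_orthogonal:
  fixes g :: "real^'n \<Rightarrow> ennreal"
  assumes U: "uniform_sphere_measure \<nu> U" and f: "orthogonal_transformation f"
    and g: "g \<in> borel_measurable borel"
  shows "(\<integral>\<^sup>+ x. g (f x) \<partial>U) = (\<integral>\<^sup>+ x. g x \<partial>U)"
  using nn_integral_distr[of f U borel g] distr_uniform_sphere_orthogonal[OF U f] g
    linear_borel_measurable[OF orthogonal_transformation_linear[OF f]]
  by (simp add: measurable_uniform_sphere[OF U])

lemma orthogonal_transformation_negate_coordinate:
  "orthogonal_transformation (\<lambda>x::real^'n. \<chi> i. if i = j then - x$i else x$i)"
  unfolding orthogonal_transformation_def
proof
  show "linear (\<lambda>x::real^'n. \<chi> i. if i = j then - x$i else x$i)"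
    by (rule linearI) (auto simp: vec_eq_iff)
  show "\<forall>v w. (\<chi> i. if i = j then - v$i else v$i) \<bullet> (\<chi> i. if i = j then - w$i else w$i) = v \<bullet> (w::real^'n)"
    by (auto simp: inner_vec_def intro!: sum.cong)
qed

lemma orthogonal_transformation_permute_coordinates:
  assumes "bij p"
  shows "orthogonal_transformation (\<lambda>x::real^'n. \<chi> i. x $ p i)"
  unfolding orthogonal_transformation_def
proof
  show "linear (\<lambda>x::real^'n. \<chi> i. x $ p i)"
    by (rule linearI) (auto simp: vec_eq_iff)
  show "\<forall>v w. (\<chi> i. v $ p i) \<bullet> (\<chi> i. w $ p i) = v \<bullet> (w::real^'n)"
  proof (intro allI)
    fix v w :: "real^'n"
    show "(\<chi> i. v $ p i) \<bullet> (\<chi> i. w $ p i) = v \<bullet> w"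
      using sum.reindex_bij_betw[of p UNIV UNIV "\<lambda>i. v $ i * w $ i"] assms
      by (simp add: inner_vec_def)
  qed
qed

lemma sum_coordinate_squares: "(\<Sum>i\<in>UNIV. (x::real^'n)$i * x$i) = (norm x)\<^sup>2"
  by (simp add: power2_norm_eq_inner inner_vec_def)

lemma integrable_uniform_sphere_coordinate_product:
  assumes U: "uniform_sphere_measure \<nu> U"
  shows "integrable U (\<lambda>x::real^'n. x$j * x$k)"
proof -
  interpret prob_space U using U by (rule uniform_sphere_prob_space)
  have "AE x in U. norm (x$j * x$k) \<le> \<nu> * \<nu>"
    using AE_in_uniform_sphere[OF U]
  proof eventually_elim
    case (elim x)
    have "\<bar>x$j\<bar> \<le> \<nu>" "\<bar>x$k\<bar> \<le> \<nu>" using component_le_norm_cart[of x] elim by auto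
    then show ?case by (simp add: abs_mult mult_mono')
  qed
  then show ?thesis
    by (rule integrable_const_bound) (simp add: measurable_uniform_sphere[OF U])
qed

lemma integral_uniform_sphere_norm_square:
  assumes U: "uniform_sphere_measure \<nu> U"
  shows "(\<integral> x. (norm (x::real^'n))\<^sup>2 \<partial>U) = \<nu>\<^sup>2"
proof -
  interpret prob_space U using U by (rule uniform_sphere_prob_space)
  have "(\<integral> x. (norm (x::real^'n))\<^sup>2 \<partial>U) = (\<integral> x. \<nu>\<^sup>2 \<partial>U)"
    using AE_in_uniform_sphere[OF U]
    by (intro integral_cong_AE) (auto simp: measurable_uniform_sphere[OF U] elim!: eventually_mono)
  then show ?thesis by (simp add: prob_space)
qed

lemma uniform_sphere_second_moment:
  assumes U: "uniform_sphere_measure \<nu> U"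
  shows "(\<integral> x. (x::real^'n)$j * x$k \<partial>U) = (if j = k then \<nu>\<^sup>2 / CARD('n) else 0)"
proof -
  have mb: "(\<lambda>x::real^'n. x$a * x$b) \<in> borel_measurable borel" for a b by simp
  have off_diagonal: "(\<integral> x. (x::real^'n)$a * x$b \<partial>U) = 0" if "a \<noteq> b" for a b
  proof -
    have "(\<integral> x. (x::real^'n)$a * x$b \<partial>U) = (\<integral> x. (\<chi> i. if i = a then - x$i else x$i)$a * (\<chi> i. if i = a then - x$i else (x::real^'n)$i)$b \<partial>U)"
      by (rule integral_uniform_sphere_orthogonal[OF U orthogonal_transformation_negate_coordinate mb, symmetric])
    also have "\<dots> = - (\<integral> x. (x::real^'n)$a * x$b \<partial>U)" using that by simp
    finally show ?thesis by simp
  qed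
  have diagonal_const: "(\<integral> x. (x::real^'n)$a * x$a \<partial>U) = (\<integral> x. (x::real^'n)$j * x$j \<partial>U)" for a
    using integral_uniform_sphere_orthogonal[OF U orthogonal_transformation_permute_coordinates mb,
        of "Transposition.transpose a j" j j]
    by simp
  have "CARD('n) * (\<integral> x. (x::real^'n)$j * x$j \<partial>U) = (\<Sum>a\<in>UNIV. (\<integral> x. (x::real^'n)$a * x$a \<partial>U))"
    by (subst sum.cong[OF refl diagonal_const]) simp
  also have "\<dots> = (\<integral> x. (\<Sum>a\<in>UNIV. (x::real^'n)$a * x$a) \<partial>U)"
    using integrable_uniform_sphere_coordinate_product[OF U] by (simp add: integral_sum)
  also have "\<dots> = (\<integral> x. (norm (x::real^'n))\<^sup>2 \<partial>U)"
    by (simp add: sum_coordinate_squares)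
  also have "\<dots> = \<nu>\<^sup>2" by (rule integral_uniform_sphere_norm_square[OF U])
  finally show ?thesis using off_diagonal[of j k] by (auto simp: field_simps)
qed

lemma uniform_sphere_inner_square:
  assumes U: "uniform_sphere_measure \<nu> U"
  shows "integrable U (\<lambda>x. (b \<bullet> (x::real^'n))\<^sup>2)"
    and "(\<integral> x. (b \<bullet> (x::real^'n))\<^sup>2 \<partial>U) = \<nu>\<^sup>2 / CARD('n) * (norm b)\<^sup>2"
proof -
  have expand: "(b \<bullet> x)\<^sup>2 = (\<Sum>j\<in>UNIV. \<Sum>k\<in>UNIV. (b$j * b$k) * (x$j * x$k))" for x :: "real^'n"
    by (simp add: inner_vec_def power2_eq_square sum_product algebra_simps)
  have int: "integrable U (\<lambda>x. (b$j * b$k) * ((x::real^'n)$j * x$k))" for j k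
    using integrable_uniform_sphere_coordinate_product[OF U] by simp
  show "integrable U (\<lambda>x. (b \<bullet> (x::real^'n))\<^sup>2)"
    unfolding expand using int by (intro Bochner_Integration.integrable_sum)
  have "(\<integral> x. (b \<bullet> (x::real^'n))\<^sup>2 \<partial>U) = (\<Sum>j\<in>UNIV. \<Sum>k\<in>UNIV. (b$j * b$k) * (\<integral> x. (x::real^'n)$j * x$k \<partial>U))"
    unfolding expand using int integrable_uniform_sphere_coordinate_product[OF U]
    by (simp add: integral_sum Bochner_Integration.integrable_sum)
  also have "\<dots> = (\<Sum>j\<in>UNIV. (b$j * b$j) * (\<nu>\<^sup>2 / CARD('n)))"
    by (simp add: uniform_sphere_second_moment[OF U] if_distrib cong: if_cong)
  also have "\<dots> = \<nu>\<^sup>2 / CARD('n) * (norm b)\<^sup>2"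
    by (simp add: sum_coordinate_squares[symmetric] sum_distrib_left algebra_simps)
  finally show "(\<integral> x. (b \<bullet> (x::real^'n))\<^sup>2 \<partial>U) = \<nu>\<^sup>2 / CARD('n) * (norm b)\<^sup>2" .
qed

lemma symmetric_matrix_inner_commute:
  fixes A :: "real^'n^'n"
  assumes "transpose A = A"
  shows "(A *v x) \<bullet> y = x \<bullet> (A *v y)"
proof -
  have "x \<bullet> (A *v y) = (transpose A *v x) \<bullet> y"
    by (simp add: dot_lmul_matrix[symmetric])
  then show ?thesis using assms by simp
qed

lemma idempotent_matrix_vector_mult:
  fixes A :: "real^'n^'n"
  assumes "A ** A = A"
  shows "A *v (A *v x) = A *v x"
  using assms by (simp add: matrix_vector_mul_assoc)

lemma symmetric_idempotent_quadratic_form: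
  fixes A :: "real^'n^'n"
  assumes sym: "transpose A = A" and idem: "A ** A = A"
  obtains B where "finite B" "card B = rank A" "\<And>b. b \<in> B \<Longrightarrow> norm b = 1"
    "\<And>x. x \<bullet> (A *v x) = (\<Sum>b\<in>B. (b \<bullet> x)\<^sup>2)"
proof -
  let ?S = "range (\<lambda>x. A *v x)"
  have "subspace ?S"
    by (rule linear_subspace_image[OF matrix_vector_mul_linear[of A] subspace_UNIV])
  then obtain B where BS: "B \<subseteq> ?S" and orth: "pairwise orthogonal B"
    and unit: "\<And>x. x \<in> B \<Longrightarrow> norm x = 1" and ind: "independent B"
    and card: "card B = dim ?S" and span: "span B = ?S"
    by (rule orthonormal_basis_subspace) blast
  have fin: "finite B" using ind by (rule finiteI_independent)
  have fixed: "A *v b = b" if "b \<in> B" for b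
    using BS that idempotent_matrix_vector_mult[OF idem] by blast
  have expand: "A *v x = (\<Sum>b\<in>B. (x \<bullet> b) *\<^sub>R b)" for x
  proof -
    have "A *v x = (\<Sum>b\<in>B. ((A *v x) \<bullet> b) *\<^sub>R b)"
      using orthonormal_basis_expand[OF orth unit _ fin] span by simp
    also have "\<dots> = (\<Sum>b\<in>B. (x \<bullet> b) *\<^sub>R b)"
      by (intro sum.cong refl) (simp add: symmetric_matrix_inner_commute[OF sym] fixed)
    finally show ?thesis .
  qed
  have "x \<bullet> (A *v x) = (\<Sum>b\<in>B. (b \<bullet> x)\<^sup>2)" for x
    by (simp add: expand inner_sum_right power2_eq_square inner_commute)
  moreover have "card B = rank A" using card rank_dim_range by metis
  ultimately show ?thesis using that fin unit by blast
qed

lemma uniform_sphere_projection_residual: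
  fixes A :: "real^'n^'n"
  assumes U: "uniform_sphere_measure \<nu> U"
    and sym: "transpose A = A" and idem: "A ** A = A"
  shows "(\<integral>\<^sup>+ x. ennreal ((norm (x - A *v x))\<^sup>2) \<partial>U) = ennreal (\<nu>\<^sup>2 * (1 - rank A / CARD('n)))"
proof -
  obtain B where fin: "finite B" and card: "card B = rank A" and unit: "\<And>b. b \<in> B \<Longrightarrow> norm b = 1"
    and quad: "\<And>x. x \<bullet> (A *v x) = (\<Sum>b\<in>B. (b \<bullet> x)\<^sup>2)"
    by (rule symmetric_idempotent_quadratic_form[OF sym idem]) blast
  have residual: "(norm (x - A *v x))\<^sup>2 = (norm x)\<^sup>2 - (\<Sum>b\<in>B. (b \<bullet> x)\<^sup>2)" for x
    using symmetric_matrix_inner_commute[OF sym, of "A *v x" x] idempotent_matrix_vector_mult[OF idem]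
    by (simp add: power2_norm_eq_inner inner_diff_left inner_diff_right inner_commute quad[symmetric])
  have int_norm: "integrable U (\<lambda>x. (norm (x::real^'n))\<^sup>2)"
    using integrable_uniform_sphere_coordinate_product[OF U]
    by (simp add: sum_coordinate_squares[symmetric])
  have int_quad: "integrable U (\<lambda>x. \<Sum>b\<in>B. (b \<bullet> (x::real^'n))\<^sup>2)"
    using uniform_sphere_inner_square(1)[OF U] by (rule Bochner_Integration.integrable_sum)
  have "(\<integral> x. (\<Sum>b\<in>B. (b \<bullet> (x::real^'n))\<^sup>2) \<partial>U) = (\<Sum>b\<in>B. \<nu>\<^sup>2 / CARD('n))"
    using uniform_sphere_inner_square[OF U] unit by (simp add: integral_sum)
  also have "\<dots> = rank A * (\<nu>\<^sup>2 / CARD('n))" using card by simp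
  finally have "(\<integral> x. (norm (x - A *v x))\<^sup>2 \<partial>U) = \<nu>\<^sup>2 * (1 - rank A / CARD('n))"
    unfolding residual using int_norm int_quad integral_uniform_sphere_norm_square[OF U]
    by (simp add: Bochner_Integration.integral_diff algebra_simps)
  moreover have "integrable U (\<lambda>x. (norm (x - A *v x))\<^sup>2)"
    unfolding residual using int_norm int_quad by (rule Bochner_Integration.integrable_diff)
  ultimately show ?thesis by (simp add: nn_integral_eq_integral)
qed

lemma orthogonal_transformation_projection_reflection:
  fixes A :: "real^'n^'n"
  assumes sym: "transpose A = A" and idem: "A ** A = A"
  shows "orthogonal_transformation (\<lambda>x. 2 *\<^sub>R (A *v x) - x)"
  unfolding orthogonal_transformation_def
proof (intro conjI allI)
  show "linear (\<lambda>x. 2 *\<^sub>R (A *v x) - x)"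
    by (rule linearI)
      (simp_all add: matrix_vector_right_distrib matrix_vector_mult_scaleR algebra_simps)
  fix v w :: "real^'n"
  have "(A *v v) \<bullet> (A *v w) = v \<bullet> (A *v w)"
    using symmetric_matrix_inner_commute[OF sym] idempotent_matrix_vector_mult[OF idem] by simp
  then show "(2 *\<^sub>R (A *v v) - v) \<bullet> (2 *\<^sub>R (A *v w) - w) = v \<bullet> w"
    using symmetric_matrix_inner_commute[OF sym, of v w]
    by (simp add: inner_diff_left inner_diff_right algebra_simps)
qed

lemma estimator_slice_measurable:
  assumes "T \<in> estimators R"
  shows "(\<lambda>r. T r A y) \<in> borel_measurable R"
proof -
  have slice: "(\<lambda>r. (r, A, y)) \<in> measurable R (R \<Otimes>\<^sub>M (borel \<Otimes>\<^sub>M borel))" by measurable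
  have "(\<lambda>(r, A, y). T r A y) \<in> borel_measurable (R \<Otimes>\<^sub>M (borel \<Otimes>\<^sub>M borel))"
    using assms by (simp add: estimators_def)
  from measurable_compose[OF slice this] show ?thesis by simp
qed

lemma estimator_risk_integrand_measurable:
  fixes T :: "'r \<Rightarrow> real^'n^'n \<Rightarrow> real^'n \<Rightarrow> real^'n"
  assumes R: "prob_space R" and T: "T \<in> estimators R"
  shows "(\<lambda>(x, A). \<integral>\<^sup>+ r. ennreal ((norm (T r A (A *v x) - x))\<^sup>2) \<partial>R) \<in> borel_measurable (borel \<Otimes>\<^sub>M borel)"
proof -
  interpret prob_space R by (rule R)
  have mult: "(\<lambda>p::(real^'n) \<times> (real^'n^'n). snd p *v fst p) \<in> borel_measurable (borel \<Otimes>\<^sub>M borel)"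
    unfolding borel_prod matrix_vector_mult_def
    by (intro borel_measurable_continuous_onI continuous_on_vec_lambda continuous_intros)
  have data: "(\<lambda>(p::(real^'n) \<times> (real^'n^'n), r). (r, snd p, snd p *v fst p))
      \<in> measurable ((borel \<Otimes>\<^sub>M borel) \<Otimes>\<^sub>M R) (R \<Otimes>\<^sub>M (borel \<Otimes>\<^sub>M borel))"
    using mult by measurable
  have "(\<lambda>(r, A, y). T r A y) \<in> borel_measurable (R \<Otimes>\<^sub>M (borel \<Otimes>\<^sub>M borel))"
    using T by (simp add: estimators_def)
  from measurable_compose[OF data this] have "(\<lambda>(p::(real^'n) \<times> (real^'n^'n), r). T r (snd p) (snd p *v fst p))
      \<in> borel_measurable ((borel \<Otimes>\<^sub>M borel) \<Otimes>\<^sub>M R)"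
    by (simp add: split_beta')
  then have "(\<lambda>(p, r). ennreal ((norm (T r (snd p) (snd p *v fst p) - fst p))\<^sup>2))
      \<in> borel_measurable ((borel \<Otimes>\<^sub>M borel) \<Otimes>\<^sub>M R)"
    by measurable
  from borel_measurable_nn_integral[OF this] show ?thesis by (simp add: split_beta')
qed

lemma matrix_vector_mult_projection_reflection:
  fixes A :: "real^'n^'n"
  assumes "A ** A = A"
  shows "A *v (2 *\<^sub>R (A *v x) - x) = A *v x"
  using idempotent_matrix_vector_mult[OF assms] linear_scale[OF matrix_vector_mul_linear, of A 2 "A *v x"]
  by (simp add: matrix_vector_mult_diff_distrib scaleR_2)

text \<open>The estimator receives the same data at \<open>x\<close> and at its reflection, so one of the two
  estimates is far off.\<close>

lemma estimator_loss_reflection_pair_ge: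
  fixes A :: "real^'n^'n" and T :: "'r \<Rightarrow> real^'n^'n \<Rightarrow> real^'n \<Rightarrow> real^'n" and x :: "real^'n"
  assumes R: "prob_space R" and T: "T \<in> estimators R" and idem: "A ** A = A"
  defines "x' \<equiv> 2 *\<^sub>R (A *v x) - x"
  shows "ennreal (2 * (norm (x - A *v x))\<^sup>2)
    \<le> (\<integral>\<^sup>+ r. ennreal ((norm (T r A (A *v x) - x))\<^sup>2) \<partial>R)
      + (\<integral>\<^sup>+ r. ennreal ((norm (T r A (A *v x') - x'))\<^sup>2) \<partial>R)"
proof -
  interpret prob_space R by (rule R)
  have "ennreal (2 * (norm (x - A *v x))\<^sup>2) = (\<integral>\<^sup>+ r. ennreal (2 * (norm (x - A *v x))\<^sup>2) \<partial>R)"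
    by (simp add: emeasure_space_1)
  also have "\<dots> \<le> (\<integral>\<^sup>+ r. ennreal ((norm (T r A (A *v x) - x))\<^sup>2)
      + ennreal ((norm (T r A (A *v x) - x'))\<^sup>2) \<partial>R)"
    using parallelogram_reflection_lower_bound[of x "A *v x"]
    by (intro nn_integral_mono) (simp add: x'_def ennreal_plus[symmetric] del: ennreal_plus)
  also have "\<dots> = (\<integral>\<^sup>+ r. ennreal ((norm (T r A (A *v x) - x))\<^sup>2) \<partial>R)
      + (\<integral>\<^sup>+ r. ennreal ((norm (T r A (A *v x') - x'))\<^sup>2) \<partial>R)"
    using estimator_slice_measurable[OF T]
    by (subst nn_integral_add) (auto simp: x'_def matrix_vector_mult_projection_reflection[OF idem])
  finally show ?thesis .
qed

lemma nn_integral_uniform_sphere_estimator_loss_ge: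
  fixes A :: "real^'n^'n" and T :: "'r \<Rightarrow> real^'n^'n \<Rightarrow> real^'n \<Rightarrow> real^'n"
  assumes U: "uniform_sphere_measure \<nu> U" and R: "prob_space R" and T: "T \<in> estimators R"
    and sym: "transpose A = A" and idem: "A ** A = A"
  shows "ennreal (\<nu>\<^sup>2 * (1 - rank A / CARD('n)))
    \<le> (\<integral>\<^sup>+ x. (\<integral>\<^sup>+ r. ennreal ((norm (T r A (A *v x) - x))\<^sup>2) \<partial>R) \<partial>U)"
proof -
  define h where "h x = (\<integral>\<^sup>+ r. ennreal ((norm (T r A (A *v x) - x))\<^sup>2) \<partial>R)" for x
  define Q where "Q x = 2 *\<^sub>R (A *v x) - x" for x :: "real^'n"
  have Q: "orthogonal_transformation Q"
    unfolding Q_def by (rule orthogonal_transformation_projection_reflection[OF sym idem])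
  have h: "h \<in> borel_measurable borel"
    using measurable_compose[OF measurable_Pair2'[of A borel borel]
        estimator_risk_integrand_measurable[OF R T]]
    by (simp add: h_def[abs_def])
  have hQ: "(\<lambda>x. h (Q x)) \<in> borel_measurable borel"
    using measurable_compose[OF linear_borel_measurable[OF orthogonal_transformation_linear[OF Q]] h]
    by (simp add: o_def)
  have "ennreal 2 * ennreal (\<nu>\<^sup>2 * (1 - rank A / CARD('n)))
      = (\<integral>\<^sup>+ x. ennreal 2 * ennreal ((norm (x - A *v x))\<^sup>2) \<partial>U)"
  proof (subst nn_integral_cmult)
    show "(\<lambda>x. ennreal ((norm (x - A *v x))\<^sup>2)) \<in> borel_measurable U"
      unfolding measurable_uniform_sphere[OF U]
      using linear_borel_measurable[OF matrix_vector_mul_linear[of A]] by measurable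
  qed (simp add: uniform_sphere_projection_residual[OF U sym idem])
  also have "\<dots> \<le> (\<integral>\<^sup>+ x. h x + h (Q x) \<partial>U)"
    using estimator_loss_reflection_pair_ge[OF R T idem]
    by (intro nn_integral_mono)
      (metis h_def Q_def ennreal_mult ennreal_numeral zero_le_numeral zero_le_power2)
  also have "\<dots> = (\<integral>\<^sup>+ x. h x \<partial>U) + (\<integral>\<^sup>+ x. h (Q x) \<partial>U)"
    using h hQ by (intro nn_integral_add) (simp_all add: measurable_uniform_sphere[OF U])
  also have "\<dots> = ennreal 2 * (\<integral>\<^sup>+ x. h x \<partial>U)"
    by (simp add: nn_integral_uniform_sphere_orthogonal[OF U Q h] mult_2)
  finally show ?thesis
    unfolding h_def by (subst (asm) ennreal_mult_le_mult_iff) auto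
qed

lemma bayes_risk_uniform_sphere_ge:
  fixes T :: "'r \<Rightarrow> real^'n^'n \<Rightarrow> real^'n \<Rightarrow> real^'n"
  assumes U: "uniform_sphere_measure \<nu> U" and P: "uniform_proj_measure m P"
    and R: "prob_space R" and T: "T \<in> estimators R"
  shows "ennreal (\<nu>\<^sup>2 * (1 - m / CARD('n))) \<le> (\<integral>\<^sup>+ x. risk R P T x \<partial>U)"
proof -
  interpret U: prob_space U using U by (rule uniform_sphere_prob_space)
  interpret P: prob_space P using P by (simp add: uniform_proj_measure_def)
  interpret UP: pair_sigma_finite U P
    by (intro pair_sigma_finite.intro U.sigma_finite_measure P.sigma_finite_measure)
  define F where "F x A = (\<integral>\<^sup>+ r. ennreal ((norm (T r A (A *v x) - x))\<^sup>2) \<partial>R)" for x A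
  have sets_UP: "sets (U \<Otimes>\<^sub>M P) = sets (borel \<Otimes>\<^sub>M borel)"
    using U P by (intro sets_pair_measure_cong)
      (simp_all add: uniform_sphere_measure_def uniform_proj_measure_def)
  have F: "case_prod F \<in> borel_measurable (U \<Otimes>\<^sub>M P)"
    using estimator_risk_integrand_measurable[OF R T]
    by (simp add: measurable_cong_sets[OF sets_UP refl] F_def split_beta')
  have "AE A in P. A \<in> rank_proj m"
    using P by (intro P.AE_prob_1) (simp add: uniform_proj_measure_def measure_def)
  then have "AE A in P. ennreal (\<nu>\<^sup>2 * (1 - m / CARD('n))) \<le> (\<integral>\<^sup>+ x. F x A \<partial>U)"
    by eventually_elim
      (auto simp: rank_proj_def F_def intro: nn_integral_uniform_sphere_estimator_loss_ge[OF U R T])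
  then have "ennreal (\<nu>\<^sup>2 * (1 - m / CARD('n))) \<le> (\<integral>\<^sup>+ A. (\<integral>\<^sup>+ x. F x A \<partial>U) \<partial>P)"
    using nn_integral_mono_AE[of "\<lambda>_. ennreal _" _ P] by (simp add: P.emeasure_space_1)
  also have "\<dots> = (\<integral>\<^sup>+ x. risk R P T x \<partial>U)"
    unfolding risk_def F_def[symmetric] by (rule UP.Fubini'[OF F])
  finally show ?thesis .
qed

theorem lemma5:
  fixes m :: nat and \<nu> :: real
    and U :: "(real^'n) measure" and P :: "(real^'n^'n) measure" and R :: "'r measure"
  assumes "1 \<le> m" and "m \<le> CARD('n)" and "\<nu> > 0"
    and "uniform_sphere_measure \<nu> U"
    and "uniform_proj_measure m P"
    and "prob_space R"
  shows "(INF T\<in>estimators R. SUP x\<in>sphere 0 \<nu>. risk R P T x)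
           \<ge> (INF T\<in>estimators R. \<integral>\<^sup>+ x. risk R P T x \<partial>U)
       \<and> (INF T\<in>estimators R. \<integral>\<^sup>+ x. risk R P T x \<partial>U)
           \<ge> ennreal (\<nu>\<^sup>2 * (1 - real m / real CARD('n)))"
proof
  note U = assms(4)
  show "(INF T\<in>estimators R. \<integral>\<^sup>+ x. risk R P T x \<partial>U) \<le> (INF T\<in>estimators R. SUP x\<in>sphere 0 \<nu>. risk R P T x)"
    using nn_integral_le_SUP_if_AE_in[OF uniform_sphere_prob_space[OF U] AE_in_uniform_sphere[OF U]]
    by (intro INF_mono) blast
  show "ennreal (\<nu>\<^sup>2 * (1 - real m / real CARD('n))) \<le> (INF T\<in>estimators R. \<integral>\<^sup>+ x. risk R P T x \<partial>U)"
    using bayes_risk_uniform_sphere_ge[OF U assms(5,6)] by (rule INF_greatest)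
qed

end
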